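(* Let $t=\frac13$ and $p=\frac1b$ for an integer $b\ge3$. Then bold play is optimal, i.e. $\pi(p,\frac13)=1-(1-p)^3$, attained by $c_1=c_2=c_3=\frac13$, $c_i=0$ for $i\ge4$.
   Context: Let $\beta_1,\beta_2,\ldots$ be independent Bernoulli random variables with success probability $p$. A stake sequence is a sequence $\gamma=(c_1,c_2,\ldots)$ of non-negative reals with $c_1\ge c_2\ge\cdots$ and $\sum_i c_i=1$; write $S_\gamma=\sum_i c_i\beta_i$. For $0\le p\le t\le 1$ define $\pi(p,t)=\sup\{\mathbf P(S_\gamma\ge t)\mid \gamma \text{ a stake sequence}\}$. Bold play for threshold $t$ is the stake sequence with $c_i=\frac1m$ for $i\le m$ and $c_i=0$ for $i>m$, where $m=\lfloor 1/t\rfloor$; it is optimal if it attains $\pi(p,t)$. *)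

theory Defs
  imports "HOL-Probability.Probability"
begin

text \<open>Indices are shifted by one: c 0 is the paper's c_1.\<close>

definition stake_seq :: "(nat \<Rightarrow> real) \<Rightarrow> bool" where
  "stake_seq c \<longleftrightarrow> (\<forall>i. 0 \<le> c i) \<and> (\<forall>i. c (Suc i) \<le> c i) \<and> c sums 1"

definition bern_space :: "real \<Rightarrow> bool stream measure" where
  "bern_space p = stream_space (measure_pmf (bernoulli_pmf p))"

definition S_gamma :: "(nat \<Rightarrow> real) \<Rightarrow> bool stream \<Rightarrow> real" where
  "S_gamma c \<omega> = (\<Sum>i. c i * (if \<omega> !! i then 1 else 0))"

definition win_prob :: "real \<Rightarrow> real \<Rightarrow> (nat \<Rightarrow> real) \<Rightarrow> real" where
  "win_prob p t c = measure (bern_space p) {\<omega> \<in> space (bern_space p). S_gamma c \<omega> \<ge> t}"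

definition pi_opt :: "real \<Rightarrow> real \<Rightarrow> real" where
  "pi_opt p t = (SUP c \<in> {c. stake_seq c}. win_prob p t c)"

definition bold_play :: "real \<Rightarrow> nat \<Rightarrow> real" where
  "bold_play t i = (let m = nat \<lfloor>1 / t\<rfloor> in if i < m then 1 / real m else 0)"

end

theory Submission
  imports Defs
begin

text \<open>For \<open>p = 1/b\<close>, throw every stake independently into one of \<open>b\<close> bins, uniformly at
random. For a fixed bin \<open>j\<close> the events "stake \<open>i\<close> lands in \<open>j\<close>" are independent of
probability \<open>p\<close>, so \<open>b \<cdot> P(S \<ge> t)\<close> is the expected number of bins whose load reaches \<open>t\<close>.
Condition on the bins of all stakes except the two largest ones \<open>c\<^sub>1 \<ge> c\<^sub>2\<close>. If the
other stakes together with either of \<open>c\<^sub>1, c\<^sub>2\<close> sum to less than \<open>3t\<close>, at most two bins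
already reach \<open>t\<close>, and among the \<open>b\<^sup>2\<close> placements of \<open>c\<^sub>1, c\<^sub>2\<close> at most
\<open>3b\<^sup>2 - 3b + 1\<close> (placement, bin) pairs reach \<open>t\<close>; hence \<open>P(S \<ge> t) \<le> (3b\<^sup>2 - 3b + 1)/b\<^sup>3 = 1 - (1 - p)\<^sup>3\<close>.
For an infinite stake sequence with \<open>c\<^sub>2 > 0\<close> this applies to all truncations at a threshold
\<open>t\<close> slightly below \<open>1/3\<close>, and continuity of measure passes to the limit.\<close>

lemma sum_if_eq_split:
  fixes x y :: "'b::comm_ring_1"
  assumes "finite A" "j \<in> A"
  shows "(\<Sum>i\<in>A. if i = j then x else y) = x + of_nat (card A - 1) * y"
  using assms by (simp add: sum.If_cases Diff_eq[symmetric])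

lemma sum_list_n_lists_upt_Suc:
  "(\<Sum>x\<leftarrow>List.n_lists (Suc n) [0..<b]. f x) = (\<Sum>ys\<leftarrow>List.n_lists n [0..<b]. \<Sum>y<b. f (y # ys))"
proof -
  have "(\<Sum>x\<leftarrow>concat (map (\<lambda>ys. map (\<lambda>y. y # ys) [0..<b]) yss). f x) = (\<Sum>ys\<leftarrow>yss. \<Sum>y<b. f (y # ys))"
    for yss by (induction yss) (simp_all add: comp_def sum_set_upt_conv_sum_list_nat[symmetric] atLeast0LessThan)
  then show ?thesis by simp
qed

lemma sum_list_sum_swap:
  "(\<Sum>x\<leftarrow>xs. \<Sum>j\<in>A. f x j) = (\<Sum>j\<in>A. \<Sum>x\<leftarrow>xs. f x j)"
  by (induction xs) (simp_all add: sum.distrib)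

lemma sum_list_n_lists_upt_le:
  assumes "\<And>ys. length ys = n \<Longrightarrow> set ys \<subseteq> {..<b} \<Longrightarrow> f ys \<le> K"
  shows "(\<Sum>ys\<leftarrow>List.n_lists n [0..<b]. f ys) \<le> real b ^ n * K"
proof -
  have "(\<Sum>ys\<leftarrow>List.n_lists n [0..<b]. f ys) \<le> (\<Sum>ys\<leftarrow>List.n_lists n [0..<b]. K)"
    by (rule sum_list_mono) (use assms in \<open>auto simp: set_n_lists atLeast0LessThan\<close>)
  then show ?thesis by (simp add: sum_list_triv length_n_lists)
qed

lemma card_mult_le_sum:
  fixes w :: "'a \<Rightarrow> real"
  assumes "finite A" "\<And>j. j \<in> A \<Longrightarrow> 0 \<le> w j" "H \<subseteq> A" "\<And>j. j \<in> H \<Longrightarrow> t \<le> w j"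
  shows "real (card H) * t \<le> sum w A"
proof -
  have "real (card H) * t = (\<Sum>j\<in>H. t)" by simp
  also have "\<dots> \<le> sum w H" using assms(4) by (rule sum_mono)
  also have "\<dots> \<le> sum w A" using assms by (intro sum_mono2) auto
  finally show ?thesis .
qed

fun finite_win_prob :: "real \<Rightarrow> real list \<Rightarrow> real \<Rightarrow> real" where
  "finite_win_prob p [] t = of_bool (t \<le> 0)"
| "finite_win_prob p (c # cs) t = p * finite_win_prob p cs (t - c) + (1 - p) * finite_win_prob p cs t"

fun bin_load :: "real list \<Rightarrow> nat list \<Rightarrow> nat \<Rightarrow> real" where
  "bin_load (c # cs) (x # xs) j = (if x = j then c else 0) + bin_load cs xs j"
| "bin_load _ _ j = 0"

lemma bin_load_nonneg: "(\<And>c. c \<in> set cs \<Longrightarrow> 0 \<le> c) \<Longrightarrow> 0 \<le> bin_load cs xs j"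
  by (induction cs xs j rule: bin_load.induct) auto

lemma sum_bin_load:
  "length xs = length cs \<Longrightarrow> set xs \<subseteq> {..<b} \<Longrightarrow> (\<Sum>j<b. bin_load cs xs j) = sum_list cs"
proof (induction cs xs "0::nat" rule: bin_load.induct)
  case (1 c cs x xs)
  then show ?case by (simp add: sum.distrib)
qed auto

lemma sum_bin_load_ge_eq:
  assumes "j < b"
  shows "(\<Sum>xs\<leftarrow>List.n_lists (length cs) [0..<b]. of_bool (t \<le> bin_load cs xs j))
       = real b ^ length cs * finite_win_prob (1 / real b) cs t"
proof (induction cs arbitrary: t)
  case Nil
  then show ?case by simp
next
  case (Cons c cs)
  let ?N = "List.n_lists (length cs) [0..<b]"
  have inner: "(\<Sum>y<b. of_bool (t \<le> bin_load (c # cs) (y # ys) j))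
      = of_bool (t - c \<le> bin_load cs ys j) + real (b - 1) * of_bool (t \<le> bin_load cs ys j)" for ys
  proof -
    have "(\<Sum>y<b. of_bool (t \<le> bin_load (c # cs) (y # ys) j))
        = (\<Sum>y<b. if y = j then of_bool (t - c \<le> bin_load cs ys j) else of_bool (t \<le> bin_load cs ys j))"
      by (rule sum.cong) auto
    also have "\<dots> = of_bool (t - c \<le> bin_load cs ys j) + real (b - 1) * of_bool (t \<le> bin_load cs ys j)"
      using assms by (simp add: sum_if_eq_split)
    finally show ?thesis .
  qed
  have "(\<Sum>xs\<leftarrow>List.n_lists (length (c # cs)) [0..<b]. of_bool (t \<le> bin_load (c # cs) xs j))
      = (\<Sum>ys\<leftarrow>?N. of_bool (t - c \<le> bin_load cs ys j)) + real (b - 1) * (\<Sum>ys\<leftarrow>?N. of_bool (t \<le> bin_load cs ys j))"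
    unfolding length_Cons sum_list_n_lists_upt_Suc inner by (simp add: sum_list_addf sum_list_const_mult)
  also have "\<dots> = real b ^ length (c # cs) * finite_win_prob (1 / real b) (c # cs) t"
    using Cons.IH[of "t - c"] Cons.IH[of t] assms by (simp add: of_nat_diff field_simps)
  finally show ?case .
qed

definition bins_reaching :: "nat \<Rightarrow> (nat \<Rightarrow> real) \<Rightarrow> real \<Rightarrow> nat set" where
  "bins_reaching b w t = {..<b} \<inter> {j. t \<le> w j}"

lemma card_bins_reaching_le: "card (bins_reaching b w t) \<le> b"
  by (metis bins_reaching_def card_lessThan card_mono finite_lessThan inf_le1)

lemma two_stakes_count_eq:
  "(\<Sum>i<b. \<Sum>k<b. \<Sum>j<b. of_bool (t \<le> (if i = j then e else 0) + (if k = j then f else 0) + w j))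
   = real (card (bins_reaching b (\<lambda>j. e + f + w j) t))
     + real (b - 1) * (real (card (bins_reaching b (\<lambda>j. e + w j) t))
                       + real (card (bins_reaching b (\<lambda>j. f + w j) t)))
     + real (b - 1) ^ 2 * real (card (bins_reaching b w t))"
proof -
  have split_k: "(\<Sum>k<b. of_bool (t \<le> a + (if k = j then f else 0) + w j))
      = of_bool (t \<le> a + f + w j) + real (b - 1) * of_bool (t \<le> a + w j)" if "j < b" for a j
  proof -
    have "(\<Sum>k<b. of_bool (t \<le> a + (if k = j then f else 0) + w j))
        = (\<Sum>k<b. if k = j then of_bool (t \<le> a + f + w j) else of_bool (t \<le> a + w j))"
      by (rule sum.cong) auto
    also have "\<dots> = of_bool (t \<le> a + f + w j) + real (b - 1) * of_bool (t \<le> a + w j)"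
      using that by (subst sum_if_eq_split) auto
    finally show ?thesis .
  qed
  have per_bin: "(\<Sum>i<b. \<Sum>k<b. of_bool (t \<le> (if i = j then e else 0) + (if k = j then f else 0) + w j))
      = of_bool (t \<le> e + f + w j) + real (b - 1) * (of_bool (t \<le> e + w j) + of_bool (t \<le> f + w j))
        + real (b - 1) ^ 2 * of_bool (t \<le> w j)" if "j < b" for j
  proof -
    have "(\<Sum>i<b. \<Sum>k<b. of_bool (t \<le> (if i = j then e else 0) + (if k = j then f else 0) + w j))
        = (\<Sum>i<b. if i = j then of_bool (t \<le> e + f + w j) + real (b - 1) * of_bool (t \<le> e + w j)
                   else of_bool (t \<le> f + w j) + real (b - 1) * of_bool (t \<le> w j))"
      using that by (intro sum.cong refl, subst split_k) (auto simp: add.assoc)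
    also have "\<dots> = of_bool (t \<le> e + f + w j) + real (b - 1) * of_bool (t \<le> e + w j)
        + real (b - 1) * (of_bool (t \<le> f + w j) + real (b - 1) * of_bool (t \<le> w j))"
      using that by (subst sum_if_eq_split) auto
    finally show ?thesis by (simp add: power2_eq_square algebra_simps)
  qed
  have "(\<Sum>i<b. \<Sum>k<b. \<Sum>j<b. of_bool (t \<le> (if i = j then e else 0) + (if k = j then f else 0) + w j))
      = (\<Sum>j<b. \<Sum>i<b. \<Sum>k<b. of_bool (t \<le> (if i = j then e else 0) + (if k = j then f else 0) + w j))"
    by (subst sum.swap) (rule sum.cong[OF refl], rule sum.swap)
  also have "\<dots> = (\<Sum>j<b. of_bool (t \<le> e + f + w j)
        + real (b - 1) * (of_bool (t \<le> e + w j) + of_bool (t \<le> f + w j))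
        + real (b - 1) ^ 2 * of_bool (t \<le> w j))"
    by (rule sum.cong[OF refl], rule per_bin) simp
  finally show ?thesis
    by (cases "b = 0") (simp_all add: sum.distrib sum_distrib_left[symmetric] of_nat_diff bins_reaching_def)
qed

lemma two_stakes_bins_bound:
  fixes w :: "nat \<Rightarrow> real"
  assumes b: "3 \<le> b" and w: "\<And>j. j < b \<Longrightarrow> 0 \<le> w j" and e: "0 \<le> e"
    and we: "(\<Sum>j<b. w j) + e < 3 * t" and wf: "(\<Sum>j<b. w j) + f < 3 * t"
  shows "real (card (bins_reaching b (\<lambda>j. e + f + w j) t))
     + real (b - 1) * (real (card (bins_reaching b (\<lambda>j. e + w j) t))
                       + real (card (bins_reaching b (\<lambda>j. f + w j) t)))
     + real (b - 1) ^ 2 * real (card (bins_reaching b w t))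
    \<le> 3 * real b ^ 2 - 3 * real b + 1"
    (is "real (card ?EF) + real (b - 1) * (real (card ?E) + real (card ?F)) + _ * real (card ?H) \<le> _")
proof -
  have le_b: "real (card (bins_reaching b w' t)) \<le> real b" for w'
    by (simp add: card_bins_reaching_le)
  have "0 \<le> (\<Sum>j<b. w j)" by (rule sum_nonneg) (simp add: w)
  then have t: "0 < t" using we e by linarith
  have "real (card ?H) * t \<le> (\<Sum>j<b. w j)"
    using w by (intro card_mult_le_sum) (auto simp: bins_reaching_def)
  then have "real (card ?H) * t < 3 * t" using we e by linarith
  then have "card ?H < 3" using t by simp
  then consider "card ?H \<le> 1" | "card ?H = 2" by linarith
  then show ?thesis
  proof cases
    case 1
    have "real (b - 1) * (real (card ?E) + real (card ?F)) \<le> real (b - 1) * (real b + real b)"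
      using le_b by (intro mult_left_mono add_mono) auto
    moreover have "real (b - 1) ^ 2 * real (card ?H) \<le> real (b - 1) ^ 2"
      using 1 by (intro mult_left_le) auto
    moreover have "real b + real (b - 1) * (real b + real b) + real (b - 1) ^ 2 = 3 * real b ^ 2 - 3 * real b + 1"
      using b by (simp add: of_nat_diff power2_eq_square algebra_simps)
    ultimately show ?thesis using le_b[of "\<lambda>j. e + f + w j"] by linarith
  next
    case 2
    \<comment> \<open>then every other bin is so light that it reaches \<open>t\<close> only if it receives both stakes\<close>
    have "w j + 2 * t \<le> (\<Sum>j<b. w j)" if "j < b" "j \<notin> ?H" for j
    proof -
      have "real (card ?H) * t \<le> sum w ({..<b} - {j})"
        using w that by (intro card_mult_le_sum) (auto simp: bins_reaching_def)
      then show ?thesis using that 2 by (simp add: sum.remove)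
    qed
    then have "?E \<subseteq> ?H" "?F \<subseteq> ?H"
      using we wf e by (force simp: bins_reaching_def)+
    then have "card ?E \<le> 2" "card ?F \<le> 2"
      using 2 by (metis card_mono finite_Int finite_lessThan bins_reaching_def)+
    then have "real (b - 1) * (real (card ?E) + real (card ?F)) \<le> real (b - 1) * 4"
      by (intro mult_left_mono) auto
    moreover have "0 \<le> (real b - 1) * (real b - 3)"
      using b by simp
    moreover have "real b + real (b - 1) * 4 + real (b - 1) ^ 2 * 2 + (real b - 1) * (real b - 3)
        = 3 * real b ^ 2 - 3 * real b + 1"
      using b by (simp add: of_nat_diff power2_eq_square algebra_simps)
    ultimately show ?thesis using le_b[of "\<lambda>j. e + f + w j"] 2 by simp
  qed
qed

lemma finite_win_prob_le:
  assumes b: "3 \<le> b" and nonneg: "\<And>c. c \<in> set (e # f # cs) \<Longrightarrow> 0 \<le> c"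
    and e: "sum_list cs + e < 3 * t" and f: "sum_list cs + f < 3 * t"
  shows "finite_win_prob (1 / real b) (e # f # cs) t \<le> 1 - (1 - 1 / real b) ^ 3"
proof -
  define N where "N xs = (\<Sum>j<b. of_bool (t \<le> bin_load (e # f # cs) xs j) :: real)" for xs
  let ?L = "List.n_lists (length cs) [0..<b]"
  define P where "P = finite_win_prob (1 / real b) (e # f # cs) t"
  have "real b ^ 3 * (real b ^ length cs * P) = (\<Sum>j<b. real b ^ length (e # f # cs) * P)"
    by (simp add: power3_eq_cube)
  also have "\<dots> = (\<Sum>xs\<leftarrow>List.n_lists (length (e # f # cs)) [0..<b]. N xs)"
    unfolding N_def sum_list_sum_swap P_def by (rule sum.cong[OF refl], rule sum_bin_load_ge_eq[symmetric]) simp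
  also have "\<dots> = (\<Sum>ys\<leftarrow>?L. \<Sum>k<b. \<Sum>i<b. N (i # k # ys))"
    by (simp only: length_Cons sum_list_n_lists_upt_Suc)
  also have "\<dots> \<le> real b ^ length cs * (3 * real b ^ 2 - 3 * real b + 1)"
  proof (rule sum_list_n_lists_upt_le)
    fix ys :: "nat list"
    assume ys: "length ys = length cs" "set ys \<subseteq> {..<b}"
    have "(\<Sum>k<b. \<Sum>i<b. N (i # k # ys))
        = (\<Sum>i<b. \<Sum>k<b. \<Sum>j<b. of_bool (t \<le> (if i = j then e else 0) + (if k = j then f else 0) + bin_load cs ys j))"
      by (subst sum.swap) (simp add: N_def add.assoc)
    also have "\<dots> \<le> 3 * real b ^ 2 - 3 * real b + 1"
      unfolding two_stakes_count_eq
      using b nonneg e f ys by (intro two_stakes_bins_bound) (auto simp: sum_bin_load intro: bin_load_nonneg)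
    finally show "(\<Sum>k<b. \<Sum>i<b. N (i # k # ys)) \<le> 3 * real b ^ 2 - 3 * real b + 1" .
  qed
  finally have "real b ^ 3 * P \<le> 3 * real b ^ 2 - 3 * real b + 1"
    using b by (simp add: mult.left_commute[of "real b ^ 3"])
  then show ?thesis
    using b unfolding P_def by (simp add: field_simps power3_eq_cube power2_eq_square)
qed

definition S_partial :: "(nat \<Rightarrow> real) \<Rightarrow> nat \<Rightarrow> bool stream \<Rightarrow> real" where
  "S_partial c n \<omega> = (\<Sum>i<n. c i * (if \<omega> !! i then 1 else 0))"

lemma S_partial_Suc_Stream:
  "S_partial c (Suc n) (x ## \<omega>) = (if x then c 0 else 0) + S_partial (\<lambda>i. c (Suc i)) n \<omega>"
  by (simp only: S_partial_def sum.lessThan_Suc_shift) simp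

lemma S_partial_mono: "(\<And>i. 0 \<le> c i) \<Longrightarrow> m \<le> n \<Longrightarrow> S_partial c m \<omega> \<le> S_partial c n \<omega>"
  unfolding S_partial_def by (intro sum_mono2) auto

lemma sets_S_partial_ge [measurable]:
  "{\<omega> \<in> space (bern_space p). t \<le> S_partial c n \<omega>} \<in> sets (bern_space p)"
  unfolding S_partial_def bern_space_def by measurable

lemma S_gamma_eq_S_partial: "(\<And>i. n \<le> i \<Longrightarrow> c i = 0) \<Longrightarrow> S_gamma c \<omega> = S_partial c n \<omega>"
  unfolding S_gamma_def S_partial_def by (rule suminf_finite) auto

lemma prob_space_bern_space: "prob_space (bern_space p)"
  unfolding bern_space_def by (rule prob_space.prob_space_stream_space[OF measure_pmf.prob_space_axioms])

lemma measure_bern_space_Stream: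
  assumes p: "0 \<le> p" "p \<le> 1" and P: "{\<omega> \<in> space (bern_space p). P \<omega>} \<in> sets (bern_space p)"
  shows "measure (bern_space p) {\<omega> \<in> space (bern_space p). P \<omega>}
       = p * measure (bern_space p) {\<omega> \<in> space (bern_space p). P (True ## \<omega>)}
       + (1 - p) * measure (bern_space p) {\<omega> \<in> space (bern_space p). P (False ## \<omega>)}"
proof -
  let ?\<mu> = "\<lambda>x. measure (bern_space p) {\<omega> \<in> space (bern_space p). P (x ## \<omega>)}"
  have "ennreal (measure (bern_space p) {\<omega> \<in> space (bern_space p). P \<omega>})
      = (\<integral>\<^sup>+x. ennreal (?\<mu> x) \<partial>measure_pmf (bernoulli_pmf p))"
    using P unfolding bern_space_def
    by (rule prob_space.prob_stream_space[OF measure_pmf.prob_space_axioms])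
  also have "\<dots> = ennreal (?\<mu> True) * ennreal p + ennreal (?\<mu> False) * ennreal (1 - p)"
    using p by simp
  also have "\<dots> = ennreal (p * ?\<mu> True + (1 - p) * ?\<mu> False)"
    using p by (simp add: ennreal_plus ennreal_mult' mult.commute)
  finally show ?thesis
    using p by (subst (asm) ennreal_inj) auto
qed

lemma measure_S_partial_ge:
  assumes "0 \<le> p" "p \<le> 1"
  shows "measure (bern_space p) {\<omega> \<in> space (bern_space p). t \<le> S_partial c n \<omega>}
       = finite_win_prob p (map c [0..<n]) t"
proof (induction n arbitrary: c t)
  case 0
  interpret prob_space "bern_space p" by (rule prob_space_bern_space)
  show ?case by (simp add: S_partial_def prob_space)
next
  case (Suc n)
  have "t \<le> c 0 + s \<longleftrightarrow> t - c 0 \<le> s" for s by linarith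
  then show ?case
    using Suc.IH by (simp add: measure_bern_space_Stream[OF assms] S_partial_Suc_Stream map_upt_Suc del: upt_Suc)
qed

lemma win_prob_le_of_S_partial:
  assumes nonneg: "\<And>i. 0 \<le> c i" and "summable c" and "t' < t"
    and bound: "\<forall>\<^sub>F n in sequentially. measure (bern_space p) {\<omega> \<in> space (bern_space p). t' \<le> S_partial c n \<omega>} \<le> B"
  shows "win_prob p t c \<le> B"
proof -
  interpret prob_space "bern_space p" by (rule prob_space_bern_space)
  define A where "A n = {\<omega> \<in> space (bern_space p). t' \<le> S_partial c n \<omega>}" for n
  have "incseq A"
    unfolding A_def incseq_def using S_partial_mono[OF nonneg] by (auto intro: order_trans)
  then have "(\<lambda>n. measure (bern_space p) (A n)) \<longlonglongrightarrow> measure (bern_space p) (\<Union>n. A n)"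
    by (rule finite_Lim_measure_incseq[rotated]) (auto simp: A_def)
  then have "measure (bern_space p) (\<Union>n. A n) \<le> B"
    using bound unfolding A_def by (intro LIMSEQ_le_const2) (auto simp: eventually_sequentially)
  moreover have "{\<omega> \<in> space (bern_space p). t \<le> S_gamma c \<omega>} \<subseteq> (\<Union>n. A n)"
  proof
    fix \<omega> assume \<omega>: "\<omega> \<in> {\<omega> \<in> space (bern_space p). t \<le> S_gamma c \<omega>}"
    have "summable (\<lambda>i. c i * (if \<omega> !! i then 1 else 0))"
      by (rule summable_comparison_test'[OF \<open>summable c\<close>, of 0]) (simp add: nonneg)
    then have "(\<lambda>n. S_partial c n \<omega>) \<longlonglongrightarrow> S_gamma c \<omega>"
      unfolding S_partial_def S_gamma_def by (rule summable_LIMSEQ)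
    moreover have "t' < S_gamma c \<omega>" using \<omega> \<open>t' < t\<close> by simp
    ultimately obtain n where "t' < S_partial c n \<omega>"
      by (metis eventually_sequentially order.refl order_tendstoD(1))
    then show "\<omega> \<in> (\<Union>n. A n)" using \<omega> by (auto simp: A_def intro: less_imp_le)
  qed
  then have "win_prob p t c \<le> measure (bern_space p) (\<Union>n. A n)"
    unfolding win_prob_def by (intro finite_measure_mono) (auto simp: A_def)
  ultimately show ?thesis by simp
qed

lemma stake_seq_antimono: "stake_seq c \<Longrightarrow> i \<le> j \<Longrightarrow> c j \<le> c i"
  unfolding stake_seq_def by (auto intro: lift_Suc_antimono_le[of c])

lemma stake_seq_sum_list_le:
  assumes "stake_seq c"
  shows "sum_list (map c [0..<n]) \<le> 1"
proof -
  have "(\<Sum>i<n. c i) \<le> suminf c"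
    using assms by (intro sum_le_suminf) (auto simp: stake_seq_def dest: sums_summable)
  then show ?thesis
    using assms sums_unique[of c 1]
    by (simp add: stake_seq_def sum_set_upt_conv_sum_list_nat[symmetric] atLeast0LessThan)
qed

lemma win_prob_second_stake_zero:
  assumes c: "stake_seq c" "c 1 = 0" and p: "0 \<le> p" "p \<le> 1" and t: "0 < t" "t \<le> 1"
  shows "win_prob p t c = p"
proof -
  have zero: "c i = 0" if "1 \<le> i" for i
    using c(2) stake_seq_antimono[OF c(1) that] c(1) unfolding stake_seq_def by (metis order_antisym)
  then have "c sums (\<Sum>i\<in>{0}. c i)"
    by (intro sums_finite) auto
  then have "c 0 = 1"
    using c(1) unfolding stake_seq_def by (simp add: sums_unique2)
  then show ?thesis
    using S_gamma_eq_S_partial[of 1 c] zero measure_S_partial_ge[OF p, of t c 1] t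
    by (simp add: win_prob_def)
qed

lemma win_prob_third_le_second_stake_pos:
  assumes b: "3 \<le> b" and c: "stake_seq c" "0 < c 1"
  shows "win_prob (1 / real b) (1/3) c \<le> 1 - (1 - 1 / real b) ^ 3"
proof -
  define p where "p = 1 / real b"
  have p: "0 \<le> p" "p \<le> 1" using b by (auto simp: p_def)
  have nonneg: "\<And>i. 0 \<le> c i" using c by (simp add: stake_seq_def)
  \<comment> \<open>any threshold strictly between \<open>(1 - c 1) / 3\<close> and \<open>1/3\<close> works\<close>
  define t where "t = (2 - c 1) / 6"
  show ?thesis
    unfolding p_def[symmetric]
  proof (rule win_prob_le_of_S_partial)
    show "summable c" using c by (auto simp: stake_seq_def dest: sums_summable)
    show "t < 1/3" using c by (simp add: t_def)
    show "\<forall>\<^sub>F n in sequentially.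
        measure (bern_space p) {\<omega> \<in> space (bern_space p). t \<le> S_partial c n \<omega>} \<le> 1 - (1 - p) ^ 3"
    proof (rule eventually_sequentiallyI[of 2])
      fix n :: nat assume "2 \<le> n"
      then have split: "map c [0..<n] = c 0 # c 1 # map c [2..<n]"
        by (simp add: upt_conv_Cons numeral_2_eq_2)
      have "c 0 + c 1 + sum_list (map c [2..<n]) \<le> 1"
        using stake_seq_sum_list_le[OF c(1), of n] by (simp add: split)
      then show "measure (bern_space p) {\<omega> \<in> space (bern_space p). t \<le> S_partial c n \<omega>}
          \<le> 1 - (1 - p) ^ 3"
        unfolding measure_S_partial_ge[OF p] split
        using b nonneg stake_seq_antimono[OF c(1), of 0 1] c(2)
        unfolding p_def by (intro finite_win_prob_le) (auto simp: t_def)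
    qed
  qed (rule nonneg)
qed

lemma win_prob_third_le:
  assumes b: "3 \<le> b" and c: "stake_seq c"
  shows "win_prob (1 / real b) (1/3) c \<le> 1 - (1 - 1 / real b) ^ 3"
proof (cases "c 1 = 0")
  case True
  have p: "0 \<le> 1 / real b" "1 / real b \<le> 1" using b by auto
  have "(1 - 1 / real b) ^ 3 \<le> (1 - 1 / real b) ^ 1"
    using p by (intro power_decreasing) auto
  then show ?thesis using win_prob_second_stake_zero[OF c True p] by simp
next
  case False
  then have "0 < c 1" using c by (simp add: stake_seq_def less_le)
  with b c show ?thesis by (rule win_prob_third_le_second_stake_pos)
qed

lemma bold_play_third: "bold_play (1/3) = (\<lambda>i. if i < 3 then 1/3 else 0)"
  by (rule ext) (simp add: bold_play_def)

lemma stake_seq_bold_play_third: "stake_seq (bold_play (1/3))"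
proof -
  have "(\<lambda>i::nat. if i < 3 then 1/3 else 0 :: real) sums (\<Sum>i<3::nat. if i < 3 then 1/3 else 0)"
    by (rule sums_finite) auto
  then show ?thesis by (simp add: stake_seq_def bold_play_third)
qed

lemma win_prob_bold_play_third:
  assumes "0 \<le> p" "p \<le> 1"
  shows "win_prob p (1/3) (bold_play (1/3)) = 1 - (1 - p) ^ 3"
proof -
  have "win_prob p (1/3) (bold_play (1/3)) = finite_win_prob p [1/3, 1/3, 1/3] (1/3)"
    using S_gamma_eq_S_partial[of 3 "bold_play (1/3)"] measure_S_partial_ge[OF assms, of "1/3" _ 3]
    by (simp add: win_prob_def bold_play_third numeral_3_eq_3)
  also have "\<dots> = 1 - (1 - p) ^ 3"
    by (simp add: power3_eq_cube algebra_simps)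
  finally show ?thesis .
qed

theorem proposition20:
  fixes b :: nat and p :: real
  assumes "b \<ge> 3" and "p = 1 / real b"
  shows "pi_opt p (1/3) = 1 - (1 - p) ^ 3
       \<and> win_prob p (1/3) (bold_play (1/3)) = pi_opt p (1/3)
       \<and> bold_play (1/3) = (\<lambda>i. if i < 3 then 1/3 else 0)"
proof -
  have p: "0 \<le> p" "p \<le> 1" using assms by auto
  have "pi_opt p (1/3) = 1 - (1 - p) ^ 3"
    unfolding pi_opt_def
  proof (rule cSup_eq_maximum)
    show "1 - (1 - p) ^ 3 \<in> win_prob p (1/3) ` {c. stake_seq c}"
      using win_prob_bold_play_third[OF p] stake_seq_bold_play_third by (metis image_eqI mem_Collect_eq)
    show "x \<le> 1 - (1 - p) ^ 3" if "x \<in> win_prob p (1/3) ` {c. stake_seq c}" for x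
      using that win_prob_third_le[OF assms(1)] assms(2) by auto
  qed
  then show ?thesis
    using win_prob_bold_play_third[OF p] bold_play_third by simp
qed

end
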